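(* Let $k$ be a field containing all $m$-th roots of unity, with $p\nmid m$ if $\operatorname{char}(k)=p>0$. Let $\mathcal A$ be a perfect $k$-algebra, $S$ a commutative associative unital $k$-algebra, $\sigma_1\in\operatorname{Aut}(\mathcal A)$, $\sigma_2\in\operatorname{Aut}(S)$ with $\sigma_1^m=\mathrm{id}$, $\sigma_2^m=\mathrm{id}$, suppose $S_{\bar 1}$ contains an invertible element $u$ of $S$, and suppose $\psi:C(\mathcal A)\otimes S\to C(\mathcal A\otimes S)$, $\gamma\otimes s\mapsto\gamma\otimes L_s$, is an isomorphism. Let $d\in\mathcal D((\mathcal A\otimes S)_{\bar 0})$ and let $D\in\mathcal D(\mathcal A\otimes S)_{\bar 0}$ satisfy $D|_{(\mathcal A\otimes S)_{\bar 0}}=d$. Let $\bar i,\bar s\in\mathbb Z_m$, $a_{\bar i}\in\mathcal A_{\bar i}$, $b_{-\bar i+\bar s}\in S_{-\bar i+\bar s}$. Then: (a) for every integer $n$ with $n\cdot 1_k\neq 0$, $$D(a_{\bar i}\otimes b_{-\bar i+\bar s})=d\big(a_{\bar i}\otimes u^{-\epsilon(\bar s)}b_{-\bar i+\bar s}\big)u^{\epsilon(\bar s)}+\epsilon(\bar s)(mn)^{-1}u^{\epsilon(\bar i)}\Big[u^{-mn}d\big(a_{\bar i}\otimes u^{-\epsilon(\bar i)+mn}\big)-d\big(a_{\bar i}\otimes u^{-\epsilon(\bar i)}\big)\Big]b_{-\bar i+\bar s};$$ in particular, if $\operatorname{char}(k)=0$ this holds for every nonzero integer $n$. (b) if $\operatorname{char}(k)=p>0$,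 then $D(a_{\bar i}\otimes b_{-\bar i+\bar s})=d(a_{\bar i}\otimes u^{-pr}b_{-\bar i+\bar s})u^{pr}$, where $r=\epsilon(\bar s\bar p^{-1})$ and $\bar p$ is the image of $p$ in $\mathbb Z_m$.
   Context: Algebras are $k$-vector spaces with bilinear product (not necessarily associative); perfect means $\mathcal A\mathcal A=\mathcal A$; $C(\mathcal A)$ is the centroid $\{\gamma\in\operatorname{End}(\mathcal A)\mid\gamma(xy)=\gamma(x)y=x\gamma(y)\}$; $\mathcal D$ denotes derivations. Fix a primitive $m$-th root of unity $\omega$; $\mathcal A_{\bar i}=\{a\mid\sigma_1(a)=\omega^ia\}$, $S_{\bar i}=\{s\mid\sigma_2(s)=\omega^is\}$, $(\mathcal A\otimes S)_{\bar i}=\sum_{\bar j}\mathcal A_{\bar i-\bar j}\otimes S_{\bar j}$, and $\mathcal D(\mathcal A\otimes S)_{\bar 0}$ is the set of derivations of $\mathcal A\otimes S$ mapping each $(\mathcal A\otimes S)_{\bar j}$ into itself. For $\bar i\in\mathbb Z_m$, $\epsilon(\bar i)$ is the unique representative of $\bar i$ in $\{0,1,\dots,m-1\}$. $\mathcal A\otimes S$ is an $S$-bimodule by $s'(a\otimes s)=(a\otimes s)s'=a\otimes ss'$; expressions like $x\,s$ or $s\,x$ for $x\in\mathcal A\otimes S$, $s\in S$ denote this action. *)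

theory Defs
  imports Main "HOL.Vector_Spaces" "HOL-Library.Function_Algebras" "HOL-Number_Theory.Cong"
begin

(* epsilon: representative in {0,...,m-1} of the class of an integer in Z_m *)
definition eps :: "nat \<Rightarrow> int \<Rightarrow> nat" where
  "eps m i = nat (i mod int m)"

(* integer powers of an invertible element u with inverse v *)
definition zpow :: "'s::comm_ring_1 \<Rightarrow> 's \<Rightarrow> int \<Rightarrow> 's" where
  "zpow u v n = (if 0 \<le> n then u ^ nat n else v ^ nat (- n))"

definition bilinear_on ::
  "('k \<Rightarrow> 'v::ab_group_add \<Rightarrow> 'v) \<Rightarrow> 'v set \<Rightarrow> ('k \<Rightarrow> 'w::ab_group_add \<Rightarrow> 'w) \<Rightarrow> 'w set \<Rightarrow>
   ('k \<Rightarrow> 't \<Rightarrow> 't) \<Rightarrow> ('v \<Rightarrow> 'w \<Rightarrow> 't::ab_group_add) \<Rightarrow> bool" where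
  "bilinear_on sV V sW W sT f \<longleftrightarrow>
     (\<forall>x\<in>V. \<forall>y\<in>V. \<forall>w\<in>W. f (x + y) w = f x w + f y w) \<and>
     (\<forall>x\<in>V. \<forall>w\<in>W. \<forall>z\<in>W. f x (w + z) = f x w + f x z) \<and>
     (\<forall>c. \<forall>x\<in>V. \<forall>w\<in>W. f (sV c x) w = sT c (f x w) \<and> f x (sW c w) = sT c (f x w))"

definition is_tensor_product ::
  "('k::field \<Rightarrow> 'v::ab_group_add \<Rightarrow> 'v) \<Rightarrow> 'v set \<Rightarrow> ('k \<Rightarrow> 'w::ab_group_add \<Rightarrow> 'w) \<Rightarrow> 'w set \<Rightarrow>
   ('k \<Rightarrow> 't \<Rightarrow> 't) \<Rightarrow> ('v \<Rightarrow> 'w \<Rightarrow> 't::ab_group_add) \<Rightarrow> bool" where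
  "is_tensor_product sV V sW W sT tp \<longleftrightarrow>
     bilinear_on sV V sW W sT tp \<and>
     (\<exists>BV BW. BV \<subseteq> V \<and> BW \<subseteq> W \<and>
        module.independent sV BV \<and> module.span sV BV = V \<and>
        module.independent sW BW \<and> module.span sW BW = W \<and>
        inj_on (\<lambda>(x, y). tp x y) (BV \<times> BW) \<and>
        module.independent sT ((\<lambda>(x, y). tp x y) ` (BV \<times> BW)) \<and>
        module.span sT ((\<lambda>(x, y). tp x y) ` (BV \<times> BW)) = UNIV)"

(* bilinear product (a k-algebra structure, not necessarily associative) *)
definition is_algebra :: "('k::field \<Rightarrow> 'a \<Rightarrow> 'a) \<Rightarrow> ('a \<Rightarrow> 'a \<Rightarrow> 'a::ab_group_add) \<Rightarrow> bool" where
  "is_algebra sc mul \<longleftrightarrow> vector_space sc \<and>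
     (\<forall>x y z. mul (x + y) z = mul x z + mul y z \<and> mul x (y + z) = mul x y + mul x z) \<and>
     (\<forall>c x y. mul (sc c x) y = sc c (mul x y) \<and> mul x (sc c y) = sc c (mul x y))"

definition perfect :: "('k::field \<Rightarrow> 'a \<Rightarrow> 'a) \<Rightarrow> ('a \<Rightarrow> 'a \<Rightarrow> 'a::ab_group_add) \<Rightarrow> bool" where
  "perfect sc mul \<longleftrightarrow> module.span sc {mul x y | x y. True} = UNIV"

definition is_automorphism ::
  "('k::field \<Rightarrow> 'a \<Rightarrow> 'a) \<Rightarrow> ('a \<Rightarrow> 'a \<Rightarrow> 'a::ab_group_add) \<Rightarrow> ('a \<Rightarrow> 'a) \<Rightarrow> bool" where
  "is_automorphism sc mul f \<longleftrightarrow> Vector_Spaces.linear sc sc f \<and> bij f \<and>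
     (\<forall>x y. f (mul x y) = mul (f x) (f y))"

definition centroid ::
  "('k::field \<Rightarrow> 'a \<Rightarrow> 'a) \<Rightarrow> ('a \<Rightarrow> 'a \<Rightarrow> 'a::ab_group_add) \<Rightarrow> ('a \<Rightarrow> 'a) set" where
  "centroid sc mul = {g. Vector_Spaces.linear sc sc g \<and>
     (\<forall>x y. g (mul x y) = mul (g x) y \<and> g (mul x y) = mul x (g y))}"

definition fun_scale :: "('k \<Rightarrow> 'a \<Rightarrow> 'a) \<Rightarrow> 'k \<Rightarrow> ('a \<Rightarrow> 'a) \<Rightarrow> ('a \<Rightarrow> 'a)" where
  "fun_scale sc c g = (\<lambda>x. sc c (g x))"

definition is_derivation_on ::
  "('k::field \<Rightarrow> 'a \<Rightarrow> 'a) \<Rightarrow> ('a \<Rightarrow> 'a \<Rightarrow> 'a::ab_group_add) \<Rightarrow> 'a set \<Rightarrow> ('a \<Rightarrow> 'a) \<Rightarrow> bool" where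
  "is_derivation_on sc mul X d \<longleftrightarrow>
     (\<forall>x\<in>X. d x \<in> X) \<and>
     (\<forall>x\<in>X. \<forall>y\<in>X. d (x + y) = d x + d y) \<and>
     (\<forall>c. \<forall>x\<in>X. d (sc c x) = sc c (d x)) \<and>
     (\<forall>x\<in>X. \<forall>y\<in>X. d (mul x y) = mul (d x) y + mul x (d y))"

definition grade :: "('k::field \<Rightarrow> 'a \<Rightarrow> 'a) \<Rightarrow> nat \<Rightarrow> 'k \<Rightarrow> ('a \<Rightarrow> 'a) \<Rightarrow> int \<Rightarrow> 'a set" where
  "grade sc m \<omega> \<sigma> i = {a. \<sigma> a = sc (\<omega> ^ eps m i) a}"

definition tgrade ::
  "('k::field \<Rightarrow> 't \<Rightarrow> 't) \<Rightarrow> ('a \<Rightarrow> 's \<Rightarrow> 't::ab_group_add) \<Rightarrow>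
   (int \<Rightarrow> 'a set) \<Rightarrow> (int \<Rightarrow> 's set) \<Rightarrow> int \<Rightarrow> 't set" where
  "tgrade sT tp GA GS i = module.span sT {tp a s | a s j. a \<in> GA (i - j) \<and> s \<in> GS j}"

end

theory Submission
  imports Defs
begin

text \<open>
  For \<open>t \<in> S\<close> the map \<open>x \<mapsto> D(x t) - D(x) t\<close> lies in the centroid of \<open>\<A> \<otimes> S\<close>,
  because \<open>D\<close> is a derivation and right multiplication by \<open>t\<close> commutes with the product.
  Since the centroid is \<open>C(\<A>) \<otimes> S\<close>, such maps commute with the \<open>S\<close>-action; hence
  \<open>t \<mapsto> D(x t) - D(x) t\<close> obeys the Leibniz rule in \<open>t\<close>, and
  \<open>D(x u^k) = D(x) u^k + k (D(x u) - D(x) u) u^(k-1)\<close> for all integers \<open>k\<close>.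
  Now \<open>a \<otimes> b = (a \<otimes> u^(-e) b) u^e\<close> with the bracket of degree 0, where \<open>D = d\<close>. The
  correction term is recovered from \<open>d\<close> through the same identity for \<open>k = mn\<close> (part (a)),
  and it vanishes when \<open>k\<close> is a multiple of the characteristic (part (b)).
\<close>

section \<open>Integer powers of a unit\<close>

lemma zpow_0 [simp]: "zpow u v 0 = 1"
  by (simp add: zpow_def)

context
  fixes u v :: "'s::comm_ring_1"
  assumes inverse: "u * v = 1"
begin

lemma zpow_add_one: "zpow u v (k + 1) = zpow u v k * u"
proof (cases "0 \<le> k")
  case True
  then have "nat (k + 1) = Suc (nat k)" by simp
  with True show ?thesis by (simp add: zpow_def mult.commute)
next
  case False
  then consider "k = -1" | "nat (- k) = Suc (nat (- (k + 1)))" "\<not> 0 \<le> k + 1" by linarith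
  then show ?thesis
  proof cases
    case 1
    then show ?thesis using inverse by (simp add: zpow_def mult.commute)
  next
    case 2
    with False have "zpow u v k * u = zpow u v (k + 1) * (u * v)"
      by (simp add: zpow_def algebra_simps)
    with inverse show ?thesis by simp
  qed
qed

lemma zpow_diff_one: "zpow u v (k - 1) = zpow u v k * v"
  using zpow_add_one[of "k - 1"] inverse by (simp add: mult.assoc)

lemma zpow_add: "zpow u v (k + l) = zpow u v k * zpow u v l"
proof (induction l rule: int_induct[where k = 0])
  case (step1 l)
  then show ?case by (metis add.assoc mult.assoc zpow_add_one)
next
  case (step2 l)
  then show ?case by (metis add_diff_eq mult.assoc zpow_diff_one)
qed simp

lemma zpow_uminus_mult: "zpow u v (- k) * zpow u v k = 1"
  using zpow_add[of "- k" k] by simp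

end

section \<open>Gradings by eigenspaces\<close>

lemma power_mod_root_of_unity:
  fixes \<omega> :: "'a::monoid_mult"
  assumes "\<omega> ^ m = 1"
  shows "\<omega> ^ (n mod m) = \<omega> ^ n"
  by (metis assms div_mult_mod_eq mult.commute mult_1 power_add power_mult power_one)

lemma int_eps: "0 < m \<Longrightarrow> int (eps m j) = j mod int m"
  by (simp add: eps_def)

lemma cong_eps: "0 < m \<Longrightarrow> [int (eps m j) = j] (mod int m)"
  by (simp add: int_eps)

lemma eps_add:
  assumes "0 < m"
  shows "eps m (j + j') = (eps m j + eps m j') mod m"
proof -
  have "int ((eps m j + eps m j') mod m) = (j mod int m + j' mod int m) mod int m"
    using assms by (simp add: int_eps zmod_int)
  also have "\<dots> = int (eps m (j + j'))"
    using assms by (simp add: int_eps mod_add_eq)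
  finally show ?thesis by simp
qed

lemma eps_cong: "[j = j'] (mod int m) \<Longrightarrow> eps m j = eps m j'"
  by (simp add: eps_def cong_def)

lemma grade_cong: "[j = j'] (mod int m) \<Longrightarrow> grade sc m \<omega> \<sigma> j = grade sc m \<omega> \<sigma> j'"
  by (simp add: grade_def eps_cong)

lemma tp_in_tgrade:
  assumes "module sT" "a \<in> GA i" "s \<in> GS j"
  shows "tp a s \<in> tgrade sT tp GA GS (i + j)"
  unfolding tgrade_def using assms by (intro module.span_base) force+

locale eigenspace_grading =
  fixes sc :: "'k::field \<Rightarrow> 's::comm_ring_1 \<Rightarrow> 's" and m :: nat and \<omega> :: 'k and \<sigma> :: "'s \<Rightarrow> 's"
  assumes vector_space: "vector_space sc"
    and scale_mult: "sc c (x * y) = sc c x * y"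
    and mult_hom: "\<sigma> (x * y) = \<sigma> x * \<sigma> y"
    and one_hom: "\<sigma> 1 = 1"
    and m_pos: "0 < m"
    and root_of_unity: "\<omega> ^ m = 1"
begin

interpretation vector_space sc by (rule vector_space)

lemma power_eps_add: "\<omega> ^ eps m j * \<omega> ^ eps m j' = \<omega> ^ eps m (j + j')"
  by (simp add: eps_add[OF m_pos] power_mod_root_of_unity[OF root_of_unity] power_add)

lemma scale_mult_scale: "sc c x * sc c' y = sc (c * c') (x * y)"
  by (metis mult.commute scale_mult scale_scale)

lemma grade_mult:
  "x \<in> grade sc m \<omega> \<sigma> j \<Longrightarrow> y \<in> grade sc m \<omega> \<sigma> j' \<Longrightarrow> x * y \<in> grade sc m \<omega> \<sigma> (j + j')"
  by (simp add: grade_def mult_hom scale_mult_scale power_eps_add)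

lemma one_in_grade: "1 \<in> grade sc m \<omega> \<sigma> 0"
  by (simp add: grade_def one_hom eps_def)

lemma inverse_in_grade:
  assumes u: "u \<in> grade sc m \<omega> \<sigma> j" and inverse: "u * v = 1"
  shows "v \<in> grade sc m \<omega> \<sigma> (- j)"
proof -
  define c c' where "c = \<omega> ^ eps m j" and "c' = \<omega> ^ eps m (- j)"
  have "c' * c = 1"
    unfolding c_def c'_def using power_eps_add[of "- j" j] by (simp add: eps_def)
  have "sc c (u * \<sigma> v) = 1"
    using u mult_hom[of u v] by (simp add: grade_def c_def scale_mult inverse one_hom)
  then have "u * \<sigma> v = sc c' 1"
    using \<open>c' * c = 1\<close> by (metis scale_one scale_scale)
  then have "\<sigma> v = sc c' v"
    by (metis inverse mult.commute mult.left_commute mult_1_right scale_mult mult_1_left)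
  then show ?thesis by (simp add: grade_def c'_def)
qed

lemma zpow_in_grade:
  assumes u: "u \<in> grade sc m \<omega> \<sigma> j" and inverse: "u * v = 1"
  shows "zpow u v k \<in> grade sc m \<omega> \<sigma> (k * j)"
proof (induction k rule: int_induct[where k = 0])
  case base
  then show ?case using one_in_grade by simp
next
  case (step1 k)
  then show ?case
    using grade_mult[OF _ u] by (simp add: zpow_add_one[OF inverse] distrib_right)
next
  case (step2 k)
  then show ?case
    using grade_mult[OF _ inverse_in_grade[OF u inverse]]
    by (simp add: zpow_diff_one[OF inverse] left_diff_distrib)
qed

end

section \<open>Algebras with a right action of a commutative ring\<close>

locale linear_action =
  fixes scT :: "'k::field \<Rightarrow> 't::ab_group_add \<Rightarrow> 't" and mT :: "'t \<Rightarrow> 't \<Rightarrow> 't"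
    and act :: "'t \<Rightarrow> 's::comm_ring_1 \<Rightarrow> 't"
  assumes algebra: "is_algebra scT mT"
    and act_linear: "Vector_Spaces.linear scT scT (\<lambda>x. act x s)"
begin

sublocale vector_space scT
  using algebra by (simp add: is_algebra_def)

lemma mult_add_left: "mT (x + y) z = mT x z + mT y z"
  and mult_add_right: "mT x (y + z) = mT x y + mT x z"
  and mult_scale_left: "mT (scT c x) y = scT c (mT x y)"
  and mult_scale_right: "mT x (scT c y) = scT c (mT x y)"
  using algebra by (simp_all add: is_algebra_def)

lemma mult_diff_left: "mT (x - y) z = mT x z - mT y z"
  by (rule additive.diff) (simp add: additive_def mult_add_left)

lemma mult_diff_right: "mT x (y - z) = mT x y - mT x z"
  by (rule additive.diff) (simp add: additive_def mult_add_right)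

lemma act_add: "act (x + y) s = act x s + act y s"
  and act_scale: "act (scT c x) s = scT c (act x s)"
  using act_linear by (simp_all add: linear_iff)

lemma act_additive: "additive (\<lambda>x. act x s)"
  by (simp add: additive_def act_add)

lemmas act_zero = additive.zero[OF act_additive]
  and act_minus = additive.minus[OF act_additive]
  and act_diff = additive.diff[OF act_additive]

end

locale algebra_action = linear_action scT mT act
  for scT :: "'k::field \<Rightarrow> 't::ab_group_add \<Rightarrow> 't" and mT and act :: "'t \<Rightarrow> 's::comm_ring_1 \<Rightarrow> 't" +
  assumes act_one: "act x 1 = x"
    and act_act: "act (act x s) t = act x (s * t)"
    and act_mult_left: "act (mT x y) s = mT (act x s) y"
    and act_mult_right: "act (mT x y) s = mT x (act y s)"
begin

definition act_commutator :: "('t \<Rightarrow> 't) \<Rightarrow> 's \<Rightarrow> 't \<Rightarrow> 't" where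
  "act_commutator D s x = D (act x s) - act (D x) s"

lemma act_commutator_one: "act_commutator D 1 x = 0"
  by (simp add: act_commutator_def act_one)

lemma act_commutator_in_centroid:
  assumes "is_derivation_on scT mT UNIV D"
  shows "act_commutator D s \<in> centroid scT mT"
proof -
  have D_add: "D (x + y) = D x + D y" and D_scale: "D (scT c x) = scT c (D x)"
    and D_mult: "D (mT x y) = mT (D x) y + mT x (D y)" for x y c
    using assms by (simp_all add: is_derivation_on_def)
  have "Vector_Spaces.linear scT scT (act_commutator D s)"
    by (simp add: linear_iff vector_space_axioms act_commutator_def D_add D_scale act_add
        act_scale scale_right_diff_distrib)
  moreover have "act_commutator D s (mT x y) = mT (act_commutator D s x) y" for x y
    by (simp add: act_commutator_def D_mult act_add act_mult_left mult_diff_left)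
  moreover have "act_commutator D s (mT x y) = mT x (act_commutator D s y)" for x y
    by (simp add: act_commutator_def D_mult act_add act_mult_right mult_diff_right)
  ultimately show ?thesis by (simp add: centroid_def)
qed

end

locale tensor_action = linear_action scT mT act
  for scT :: "'k::field \<Rightarrow> 't::ab_group_add \<Rightarrow> 't" and mT and act :: "'t \<Rightarrow> 's::comm_ring_1 \<Rightarrow> 't" +
  fixes tp :: "'a \<Rightarrow> 's \<Rightarrow> 't" and mA :: "'a \<Rightarrow> 'a \<Rightarrow> 'a"
  assumes pure_tensors_span: "span (range (\<lambda>(a, s). tp a s)) = UNIV"
    and tp_mult: "mT (tp a1 s1) (tp a2 s2) = tp (mA a1 a2) (s1 * s2)"
    and act_tp: "act (tp a s) t = tp a (s * t)"
begin

lemma eq_on_pure_tensors: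
  fixes f g :: "'t \<Rightarrow> 'c::ab_group_add"
  assumes "\<And>x y. f (x + y) = f x + f y" "\<And>c x. f (scT c x) = sc c (f x)"
    and "\<And>x y. g (x + y) = g x + g y" "\<And>c x. g (scT c x) = sc c (g x)"
    and "\<And>a s. f (tp a s) = g (tp a s)"
  shows "f x = g x"
proof -
  have "x \<in> span (range (\<lambda>(a, s). tp a s))"
    using pure_tensors_span by simp
  then show ?thesis
  proof (induction rule: span_induct_alt)
    case base
    have "f 0 = 0" "g 0 = 0" using assms(1,3) by (metis add_cancel_right_right)+
    then show ?case by simp
  qed (auto simp: assms)
qed

lemma act_mult_left_tp: "act (mT x (tp a s)) t = mT (act x t) (tp a s)"
  by (rule eq_on_pure_tensors[where sc = scT and f = "\<lambda>x. act (mT x (tp a s)) t"])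
    (simp_all add: act_add act_scale mult_add_left mult_scale_left tp_mult act_tp ac_simps)

lemma act_mult_right_tp: "act (mT (tp a s) y) t = mT (tp a s) (act y t)"
  by (rule eq_on_pure_tensors[where sc = scT and f = "\<lambda>y. act (mT (tp a s) y) t"])
    (simp_all add: act_add act_scale mult_add_right mult_scale_right tp_mult act_tp ac_simps)

sublocale algebra_action scT mT act
proof
  show "act x 1 = x" for x
    by (rule eq_on_pure_tensors[where sc = scT and f = "\<lambda>x. act x 1"])
      (simp_all add: act_add act_scale act_tp)
  show "act (act x s) t = act x (s * t)" for x s t
    by (rule eq_on_pure_tensors[where sc = scT and f = "\<lambda>x. act (act x s) t"])
      (simp_all add: act_add act_scale act_tp mult.assoc)
  show "act (mT x y) s = mT (act x s) y" for x y s
    by (rule eq_on_pure_tensors[where sc = scT and f = "\<lambda>y. act (mT x y) s"])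
      (simp_all add: act_add act_scale mult_add_right mult_scale_right act_mult_left_tp)
  show "act (mT x y) s = mT x (act y s)" for x y s
    by (rule eq_on_pure_tensors[where sc = scT and f = "\<lambda>x. act (mT x y) s"])
      (simp_all add: act_add act_scale mult_add_left mult_scale_left act_mult_right_tp)
qed

end

lemma tensor_product_span_pure_tensors:
  assumes "vector_space sT" and "is_tensor_product sV V sW W sT tp"
  shows "module.span sT ((\<lambda>(x, y). tp x y) ` (V \<times> W)) = UNIV"
proof -
  interpret vector_space sT by fact
  obtain BV BW where "BV \<subseteq> V" "BW \<subseteq> W" and "span ((\<lambda>(x, y). tp x y) ` (BV \<times> BW)) = UNIV"
    using assms(2) unfolding is_tensor_product_def by blast
  then show ?thesis
    using span_mono[of "(\<lambda>(x, y). tp x y) ` (BV \<times> BW)" "(\<lambda>(x, y). tp x y) ` (V \<times> W)"] by auto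
qed

locale centroid_compatible_action = algebra_action scT mT act
  for scT :: "'k::field \<Rightarrow> 't::ab_group_add \<Rightarrow> 't" and mT and act :: "'t \<Rightarrow> 's::comm_ring_1 \<Rightarrow> 't" +
  assumes centroid_commutes_act: "g \<in> centroid scT mT \<Longrightarrow> g (act x s) = act (g x) s"

lemma (in tensor_action) centroid_compatible_actionI:
  assumes span: "module.span scC ((\<lambda>(\<gamma>, s). tpC \<gamma> s) ` (\<Gamma> \<times> UNIV)) = UNIV"
    and \<psi>_linear: "Vector_Spaces.linear scC (fun_scale scT) \<psi>"
    and \<psi>_tp: "\<forall>\<gamma>\<in>\<Gamma>. \<forall>s. Vector_Spaces.linear scT scT (\<psi> (tpC \<gamma> s)) \<and>
                  (\<forall>a t. \<psi> (tpC \<gamma> s) (tp a t) = tp (\<gamma> a) (s * t))"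
    and centroid_image: "centroid scT mT \<subseteq> range \<psi>"
  shows "centroid_compatible_action scT mT act"
proof
  interpret C: vector_space scC
    using \<psi>_linear by (simp add: linear_iff)
  have \<psi>_add: "\<psi> (c + c') = \<psi> c + \<psi> c'" and \<psi>_scale: "\<psi> (scC k c) = fun_scale scT k (\<psi> c)"
    for c c' k
    using \<psi>_linear by (simp_all add: linear_iff)
  have \<psi>_zero: "\<psi> 0 = 0"
    by (rule additive.zero) (simp add: additive_def \<psi>_add)
  have generator: "\<psi> (tpC \<gamma> s) (act x t) = act (\<psi> (tpC \<gamma> s) x) t" if "\<gamma> \<in> \<Gamma>" for \<gamma> s x t
  proof -
    have generator_hom: "\<psi> (tpC \<gamma> s) (x + y) = \<psi> (tpC \<gamma> s) x + \<psi> (tpC \<gamma> s) y"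
      "\<psi> (tpC \<gamma> s) (scT k x) = scT k (\<psi> (tpC \<gamma> s) x)"
      "\<psi> (tpC \<gamma> s) (tp a t') = tp (\<gamma> a) (s * t')" for x y k a t'
      using \<psi>_tp that by (simp_all add: linear_iff)
    show ?thesis
      by (rule eq_on_pure_tensors[where sc = scT and f = "\<lambda>x. \<psi> (tpC \<gamma> s) (act x t)"])
        (simp_all add: generator_hom act_add act_scale act_tp mult.assoc)
  qed
  fix g x s
  assume "g \<in> centroid scT mT"
  with centroid_image obtain c where g: "g = \<psi> c" by blast
  have "c \<in> C.span ((\<lambda>(\<gamma>, s). tpC \<gamma> s) ` (\<Gamma> \<times> UNIV))"
    using span by simp
  then have "\<forall>x. \<psi> c (act x s) = act (\<psi> c x) s"
  proof (induction rule: C.span_induct_alt)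
    case base
    then show ?case by (simp add: \<psi>_zero act_zero)
  next
    case (step k c c')
    then obtain \<gamma> s' where "c = tpC \<gamma> s'" "\<gamma> \<in> \<Gamma>" by auto
    with step.IH show ?case
      by (simp add: \<psi>_add \<psi>_scale fun_scale_def act_add act_scale generator)
  qed
  then show "g (act x s) = act (g x) s"
    by (simp add: g)
qed

locale action_derivation = centroid_compatible_action scT mT act
  for scT :: "'k::field \<Rightarrow> 't::ab_group_add \<Rightarrow> 't" and mT and act :: "'t \<Rightarrow> 's::comm_ring_1 \<Rightarrow> 't" +
  fixes D :: "'t \<Rightarrow> 't"
  assumes derivation: "is_derivation_on scT mT UNIV D"
begin

lemma act_commutator_act: "act_commutator D t (act x s) = act (act_commutator D t x) s"
  by (rule centroid_commutes_act[OF act_commutator_in_centroid[OF derivation]])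

lemma act_commutator_mult:
  "act_commutator D (s * t) x = act (act_commutator D s x) t + act (act_commutator D t x) s"
proof -
  have "act_commutator D (s * t) x = act_commutator D t (act x s) + act (act_commutator D s x) t"
    by (simp add: act_commutator_def act_act act_diff)
  then show ?thesis by (simp add: act_commutator_act add.commute)
qed

context
  fixes u v :: 's
  assumes inverse: "u * v = 1"
begin

lemma act_commutator_inverse: "act_commutator D v x = - act (act_commutator D u x) (v * v)"
proof -
  have "act (act_commutator D v x) u = - act (act_commutator D u x) v"
    using act_commutator_mult[of u v x]
    by (simp add: inverse act_commutator_one eq_neg_iff_add_eq_0 add.commute)
  then have "act (act (act_commutator D v x) u) v = - act (act_commutator D u x) (v * v)"
    by (simp add: act_minus act_act)
  then show ?thesis by (simp add: act_act inverse act_one)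
qed

lemma act_commutator_zpow:
  "act_commutator D (zpow u v k) x = scT (of_int k) (act (act_commutator D u x) (zpow u v (k - 1)))"
proof (induction k rule: int_induct[where k = 0])
  case base
  then show ?case by (simp add: act_commutator_one)
next
  case (step1 k)
  have "zpow u v (k - 1) * u = zpow u v k"
    using zpow_add_one[OF inverse, of "k - 1"] by simp
  with step1.IH show ?case
    by (simp add: zpow_add_one[OF inverse] act_commutator_mult act_scale act_act
        scale_left_distrib mult.commute)
next
  case (step2 k)
  have "zpow u v (k - 2) = zpow u v (k - 1) * v"
    using zpow_diff_one[OF inverse, of "k - 1"] by simp
  then have "zpow u v (k - 1) * v = zpow u v (k - 2)" "v * v * zpow u v k = zpow u v (k - 2)"
    by (simp_all add: zpow_diff_one[OF inverse] mult.commute mult.left_commute)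
  with step2.IH show ?case
    by (simp add: zpow_diff_one[OF inverse] act_commutator_mult act_commutator_inverse act_scale
        act_minus act_act scale_left_diff_distrib)
qed

lemma D_act_zpow:
  "D (act x (zpow u v k)) =
     act (D x) (zpow u v k) + scT (of_int k) (act (act_commutator D u x) (zpow u v (k - 1)))"
  using act_commutator_zpow[of k x] by (simp add: act_commutator_def diff_eq_eq add.commute)

lemma D_act_zpow_of_int_eq_0:
  "of_int k = (0::'k) \<Longrightarrow> D (act x (zpow u v k)) = act (D x) (zpow u v k)"
  by (simp add: D_act_zpow)

lemma D_act_zpow_quotient:
  "act (D (act x (zpow u v k))) (zpow u v (- k)) - D x = scT (of_int k) (act (act_commutator D u x) v)"
proof -
  have "zpow u v k * zpow u v (- k) = 1" "zpow u v (k - 1) * zpow u v (- k) = v"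
    using zpow_add[OF inverse, of k "- k"] zpow_add[OF inverse, of "k - 1" "- k"]
    by (simp_all add: zpow_def)
  then show ?thesis by (simp add: D_act_zpow act_add act_scale act_act act_one)
qed

lemma D_act_zpow_difference_quotient:
  assumes "of_int N \<noteq> (0::'k)"
  shows "D (act (act x c) (zpow u v k)) =
    act (D (act x c)) (zpow u v k) +
    scT (of_int k / of_int N) (act (act (D (act x (zpow u v N))) (zpow u v (- N)) - D x) (c * zpow u v k))"
proof -
  have "D (act (act x c) (zpow u v k)) = act (D (act x c)) (zpow u v k) +
      scT (of_int k) (act (act_commutator D u (act x c)) (zpow u v (k - 1)))"
    by (rule D_act_zpow)
  also have "act_commutator D u (act x c) = act (act_commutator D u x) c"
    by (rule act_commutator_act)
  also have "v * (c * zpow u v k) = c * zpow u v (k - 1)"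
    by (simp add: zpow_diff_one[OF inverse] mult.commute mult.left_commute)
  then have "scT (of_int k) (act (act (act_commutator D u x) c) (zpow u v (k - 1))) =
      scT (of_int k / of_int N) (act (act (D (act x (zpow u v N))) (zpow u v (- N)) - D x) (c * zpow u v k))"
    using assms by (simp add: D_act_zpow_quotient act_scale act_act)
  finally show ?thesis .
qed

end

end

section \<open>Derivations of the graded tensor product\<close>

locale graded_tensor_derivation =
  tensor_action scT mT act tp mA + action_derivation scT mT act D + S: eigenspace_grading scS m \<omega> \<sigma>2
  for scT :: "'k::field \<Rightarrow> 't::ab_group_add \<Rightarrow> 't" and mT and act :: "'t \<Rightarrow> 's::comm_ring_1 \<Rightarrow> 't"
    and tp :: "'a \<Rightarrow> 's \<Rightarrow> 't" and mA and D and scS and m and \<omega> and \<sigma>2 +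
  fixes scA :: "'k \<Rightarrow> 'a \<Rightarrow> 'a" and \<sigma>1 :: "'a \<Rightarrow> 'a" and u v :: 's and d :: "'t \<Rightarrow> 't"
  assumes u_deg: "u \<in> grade scS m \<omega> \<sigma>2 1" and u_inv: "u * v = 1"
    and D_ext: "x \<in> tgrade scT tp (grade scA m \<omega> \<sigma>1) (grade scS m \<omega> \<sigma>2) 0 \<Longrightarrow> D x = d x"
begin

abbreviation degree_zero :: "'t set" where
  "degree_zero \<equiv> tgrade scT tp (grade scA m \<omega> \<sigma>1) (grade scS m \<omega> \<sigma>2) 0"

context
  fixes a :: 'a and i :: int
  assumes a_deg: "a \<in> grade scA m \<omega> \<sigma>1 i"
begin

lemma tp_in_degree_zero:
  assumes "w \<in> grade scS m \<omega> \<sigma>2 j" "[j = - i] (mod int m)"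
  shows "tp a w \<in> degree_zero"
proof -
  have "w \<in> grade scS m \<omega> \<sigma>2 (- i)"
    using assms(1) unfolding grade_cong[OF assms(2)] .
  with a_deg have "tp a w \<in> tgrade scT tp (grade scA m \<omega> \<sigma>1) (grade scS m \<omega> \<sigma>2) (i + - i)"
    by (rule tp_in_tgrade[OF module_axioms])
  then show ?thesis by simp
qed

lemma tp_zpow_in_degree_zero: "[k = - i] (mod int m) \<Longrightarrow> tp a (zpow u v k) \<in> degree_zero"
  using tp_in_degree_zero S.zpow_in_grade[OF u_deg u_inv, of k] by simp

lemma tp_zpow_mult_in_degree_zero:
  assumes "b \<in> grade scS m \<omega> \<sigma>2 (s - i)" "[k = - s] (mod int m)"
  shows "tp a (zpow u v k * b) \<in> degree_zero"
proof (rule tp_in_degree_zero)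
  show "zpow u v k * b \<in> grade scS m \<omega> \<sigma>2 (k + (s - i))"
    using S.grade_mult[OF S.zpow_in_grade[OF u_deg u_inv] assms(1)] by simp
  show "[k + (s - i) = - i] (mod int m)"
    using cong_add[OF assms(2) cong_refl[of "s - i"]] by simp
qed

theorem D_tp_difference_quotient:
  assumes b_deg: "b \<in> grade scS m \<omega> \<sigma>2 (s - i)"
    and n: "of_int n \<noteq> (0::'k)" and m: "of_nat m \<noteq> (0::'k)"
  shows "D (tp a b) =
    act (d (tp a (zpow u v (- int (eps m s)) * b))) (zpow u v (int (eps m s)))
    + scT (of_nat (eps m s) * inverse (of_nat m * of_int n))
        (act (act (d (tp a (zpow u v (- int (eps m i) + int m * n)))) (zpow u v (- (int m * n)))
              - d (tp a (zpow u v (- int (eps m i)))))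
             (zpow u v (int (eps m i)) * b))"
proof -
  define e ei N where "e = int (eps m s)" and "ei = int (eps m i)" and "N = int m * n"
  define z c where "z = tp a (zpow u v (- ei))" and "c = zpow u v ei * zpow u v (- e) * b"
  have N_nz: "of_int N \<noteq> (0::'k)"
    using n m by (simp add: N_def)
  have "[- e = - s] (mod int m)" "[- ei = - i] (mod int m)"
    using S.m_pos by (simp_all add: e_def ei_def cong_minus_minus_iff cong_eps)
  moreover have "[- ei + N = - i] (mod int m)"
    using cong_add[OF \<open>[- ei = - i] (mod int m)\<close> cong_mult_self_left[of "int m" n]]
    by (simp add: N_def)
  ultimately have in_degree_zero:
    "tp a (zpow u v (- e) * b) \<in> degree_zero" "z \<in> degree_zero" "tp a (zpow u v (- ei + N)) \<in> degree_zero"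
    by (simp_all add: tp_zpow_mult_in_degree_zero[OF b_deg] tp_zpow_in_degree_zero z_def)
  have z_c: "act z c = tp a (zpow u v (- e) * b)"
    using zpow_uminus_mult[OF u_inv, of ei] by (simp add: z_def c_def act_tp flip: mult.assoc)
  have "D (tp a b) = D (act (act z c) (zpow u v e))"
    using zpow_uminus_mult[OF u_inv, of e] by (simp add: z_c act_tp mult.commute mult.left_commute)
  also have "\<dots> = act (D (act z c)) (zpow u v e) + scT (of_int e / of_int N)
      (act (act (D (act z (zpow u v N))) (zpow u v (- N)) - D z) (c * zpow u v e))"
    by (rule D_act_zpow_difference_quotient[OF u_inv N_nz])
  also have "D (act z c) = d (tp a (zpow u v (- e) * b))"
    using D_ext in_degree_zero by (simp add: z_c)
  also have "D (act z (zpow u v N)) = d (tp a (zpow u v (- ei + N)))"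
    using D_ext in_degree_zero by (simp add: z_def act_tp flip: zpow_add[OF u_inv])
  also have "D z = d z"
    using D_ext in_degree_zero by simp
  also have "c * zpow u v e = zpow u v ei * b * (zpow u v (- e) * zpow u v e)"
    by (simp add: c_def ac_simps)
  also have "\<dots> = zpow u v ei * b"
    by (simp add: zpow_uminus_mult[OF u_inv])
  also have "of_int e / of_int N = of_nat (eps m s) * inverse (of_nat m * of_int n :: 'k)"
    by (simp add: e_def N_def divide_inverse)
  finally show ?thesis
    by (simp add: e_def ei_def N_def z_def)
qed

theorem D_tp_char_exponent:
  assumes b_deg: "b \<in> grade scS m \<omega> \<sigma>2 (s - i)" and r: "[r * int CHAR('k) = s] (mod int m)"
  shows "D (tp a b) = act (d (tp a (zpow u v (- (int CHAR('k) * r)) * b))) (zpow u v (int CHAR('k) * r))"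
proof -
  define x where "x = tp a (zpow u v (- (int CHAR('k) * r)) * b)"
  have "[- (int CHAR('k) * r) = - s] (mod int m)"
    using r by (simp add: cong_minus_minus_iff mult.commute)
  then have "x \<in> degree_zero"
    unfolding x_def by (rule tp_zpow_mult_in_degree_zero[OF b_deg])
  have "D (tp a b) = D (act x (zpow u v (int CHAR('k) * r)))"
    using zpow_uminus_mult[OF u_inv] by (simp add: x_def act_tp mult.commute mult.left_commute)
  also have "\<dots> = act (D x) (zpow u v (int CHAR('k) * r))"
    by (simp add: D_act_zpow_of_int_eq_0[OF u_inv])
  also have "D x = d x"
    using D_ext \<open>x \<in> degree_zero\<close> by simp
  finally show ?thesis
    by (simp add: x_def)
qed

end

end

theorem lemma4p4:
  fixes scA :: "'k::field \<Rightarrow> 'a::ab_group_add \<Rightarrow> 'a" and mA :: "'a \<Rightarrow> 'a \<Rightarrow> 'a"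
    and scS :: "'k \<Rightarrow> 's::comm_ring_1 \<Rightarrow> 's"
    and scT :: "'k \<Rightarrow> 't::ab_group_add \<Rightarrow> 't" and mT :: "'t \<Rightarrow> 't \<Rightarrow> 't"
    and tp :: "'a \<Rightarrow> 's \<Rightarrow> 't" and act :: "'t \<Rightarrow> 's \<Rightarrow> 't"
    and \<sigma>1 :: "'a \<Rightarrow> 'a" and \<sigma>2 :: "'s \<Rightarrow> 's"
    and m :: nat and \<omega> :: 'k and u v :: 's
    and scC :: "'k \<Rightarrow> 'c::ab_group_add \<Rightarrow> 'c" and tpC :: "('a \<Rightarrow> 'a) \<Rightarrow> 's \<Rightarrow> 'c"
    and \<psi> :: "'c \<Rightarrow> ('t \<Rightarrow> 't)"
    and d D :: "'t \<Rightarrow> 't" and i s :: int and a :: 'a and b :: 's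
  assumes m_pos: "m \<ge> 1"
    and m_nz: "of_nat m \<noteq> (0::'k)"
    and \<omega>_root: "\<omega> ^ m = 1" and \<omega>_prim: "\<forall>j. 0 < j \<and> j < m \<longrightarrow> \<omega> ^ j \<noteq> 1"
    and all_roots: "\<forall>x::'k. x ^ m = 1 \<longrightarrow> (\<exists>j<m. x = \<omega> ^ j)"
    and A_alg: "is_algebra scA mA" and A_perfect: "perfect scA mA"
    and S_vs: "vector_space scS" and S_alg: "\<forall>c x y. scS c (x * y) = scS c x * y"
    and T_tensor: "is_tensor_product scA UNIV scS UNIV scT tp"
    and T_alg: "is_algebra scT mT"
    and T_mult: "\<forall>a1 a2 s1 s2. mT (tp a1 s1) (tp a2 s2) = tp (mA a1 a2) (s1 * s2)"
    and act_lin: "\<forall>s'. Vector_Spaces.linear scT scT (\<lambda>x. act x s')"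
    and act_tp: "\<forall>a1 s1 s'. act (tp a1 s1) s' = tp a1 (s1 * s')"
    and \<sigma>1_aut: "is_automorphism scA mA \<sigma>1" and \<sigma>1_m: "\<sigma>1 ^^ m = id"
    and \<sigma>2_aut: "is_automorphism scS (*) \<sigma>2" and \<sigma>2_one: "\<sigma>2 1 = 1" and \<sigma>2_m: "\<sigma>2 ^^ m = id"
    and u_deg: "u \<in> grade scS m \<omega> \<sigma>2 1" and u_inv: "u * v = 1"
    and C_tensor: "is_tensor_product (fun_scale scA) (centroid scA mA) scS UNIV scC tpC"
    and \<psi>_lin: "Vector_Spaces.linear scC (fun_scale scT) \<psi>"
    and \<psi>_tp: "\<forall>\<gamma>\<in>centroid scA mA. \<forall>s'. Vector_Spaces.linear scT scT (\<psi> (tpC \<gamma> s')) \<and>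
                  (\<forall>a1 t. \<psi> (tpC \<gamma> s') (tp a1 t) = tp (\<gamma> a1) (s' * t))"
    and \<psi>_iso: "bij_betw \<psi> UNIV (centroid scT mT)"
    and d_der: "is_derivation_on scT mT
                  (tgrade scT tp (grade scA m \<omega> \<sigma>1) (grade scS m \<omega> \<sigma>2) 0) d"
    and D_der: "is_derivation_on scT mT UNIV D"
    and D_deg0: "\<forall>j. \<forall>x\<in>tgrade scT tp (grade scA m \<omega> \<sigma>1) (grade scS m \<omega> \<sigma>2) j.
                  D x \<in> tgrade scT tp (grade scA m \<omega> \<sigma>1) (grade scS m \<omega> \<sigma>2) j"
    and D_ext: "\<forall>x\<in>tgrade scT tp (grade scA m \<omega> \<sigma>1) (grade scS m \<omega> \<sigma>2) 0. D x = d x"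
    and a_deg: "a \<in> grade scA m \<omega> \<sigma>1 i"
    and b_deg: "b \<in> grade scS m \<omega> \<sigma>2 (s - i)"
  shows "(\<forall>n::int. of_int n \<noteq> (0::'k) \<longrightarrow>
            D (tp a b) =
              act (d (tp a (zpow u v (- int (eps m s)) * b))) (zpow u v (int (eps m s)))
              + scT (of_nat (eps m s) * inverse (of_nat m * of_int n))
                  (act (act (d (tp a (zpow u v (- int (eps m i) + int m * n)))) (zpow u v (- (int m * n)))
                        - d (tp a (zpow u v (- int (eps m i)))))
                       (zpow u v (int (eps m i)) * b)))
       \<and> (CHAR('k) = 0 \<longrightarrow> (\<forall>n::int. n \<noteq> 0 \<longrightarrow>
            D (tp a b) =
              act (d (tp a (zpow u v (- int (eps m s)) * b))) (zpow u v (int (eps m s)))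
              + scT (of_nat (eps m s) * inverse (of_nat m * of_int n))
                  (act (act (d (tp a (zpow u v (- int (eps m i) + int m * n)))) (zpow u v (- (int m * n)))
                        - d (tp a (zpow u v (- int (eps m i)))))
                       (zpow u v (int (eps m i)) * b))))
       \<and> (CHAR('k) > 0 \<longrightarrow> (\<forall>r::int. 0 \<le> r \<and> r < int m \<and> [r * int CHAR('k) = s] (mod int m) \<longrightarrow>
            D (tp a b) =
              act (d (tp a (zpow u v (- (int CHAR('k) * r)) * b))) (zpow u v (int CHAR('k) * r))))"
proof -
  \<comment> \<open>Not needed: \<open>A_alg\<close>, \<open>A_perfect\<close>, \<open>\<omega>_prim\<close>, \<open>all_roots\<close>, \<open>\<sigma>1_aut\<close>, \<open>\<sigma>1_m\<close>, \<open>\<sigma>2_m\<close>, \<open>D_deg0\<close>.\<close>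
  have T_vs: "vector_space scT"
    using T_alg by (simp add: is_algebra_def)
  interpret tensor_action scT mT act tp mA
    using T_alg tensor_product_span_pure_tensors[OF T_vs T_tensor] T_mult act_lin act_tp
    by (intro tensor_action.intro linear_action.intro tensor_action_axioms.intro) auto
  have C_span: "module.span scC ((\<lambda>(\<gamma>, s). tpC \<gamma> s) ` (centroid scA mA \<times> UNIV)) = UNIV"
    using \<psi>_lin C_tensor by (intro tensor_product_span_pure_tensors) (auto simp: linear_iff)
  interpret centroid_compatible_action scT mT act
  proof (rule centroid_compatible_actionI[OF C_span \<psi>_lin \<psi>_tp])
    show "centroid scT mT \<subseteq> range \<psi>"
      using \<psi>_iso by (simp add: bij_betw_def)
  qed
  interpret graded_tensor_derivation scT mT act tp mA D scS m \<omega> \<sigma>2 scA \<sigma>1 u v d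
  proof (rule graded_tensor_derivation.intro)
    show "action_derivation scT mT act D"
      using centroid_compatible_action_axioms D_der
      by (simp add: action_derivation_def action_derivation_axioms_def)
    show "eigenspace_grading scS m \<omega> \<sigma>2"
      using S_vs S_alg \<sigma>2_aut \<sigma>2_one m_pos \<omega>_root
      by (intro eigenspace_grading.intro) (auto simp: is_automorphism_def)
    show "graded_tensor_derivation_axioms scT tp D scS m \<omega> \<sigma>2 scA \<sigma>1 u v d"
      using u_deg u_inv D_ext by (simp add: graded_tensor_derivation_axioms_def)
  qed (fact tensor_action_axioms)
  have "of_int n \<noteq> (0::'k)" if "CHAR('k) = 0" "n \<noteq> 0" for n
    using that by (simp add: of_int_eq_0_iff_char_dvd)
  then show ?thesis
    using D_tp_difference_quotient[OF a_deg b_deg _ m_nz] D_tp_char_exponent[OF a_deg b_deg] by blast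
qed

end
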